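(* Let $\mathcal{X},\mathcal{Y}$ be finite, $p(X,Y)\in\Delta_{\mathcal{X}\times\mathcal{Y}}$ with $p(X)$ of full support, $\Lambda:=I(X;Y)$. For every $0\le\lambda\le\Lambda$, every $q(T|X)\in\mathrm{IB}(\lambda)$ factorises as $q(T|X)=\bar q\circ\pi_{\mathcal{X}}$, i.e. $q(t|x)=\bar q(t|\pi_{\mathcal{X}}(x))$ for all $x,t$.
   Context: $\mathcal{T}=\mathbb{N}$. For $q(T|X)\in C(\mathcal{X},\mathcal{T})$ the joint is $q(x,y,t)=p(x,y)q(t|x)$. $\mathrm{IB}(\lambda):=\operatorname{argmin}\{I_q(X;T): q(T|X)\in C(\mathcal{X},\mathcal{T}),\ I_q(T;Y)\ge\lambda\}$. The relation $x\sim_{\mathcal{X}}x'\iff p(Y|x)=p(Y|x')$ has partition $\bar{\mathcal{X}}=\{\mathcal{X}_j\}_j$ and projection $\pi_{\mathcal{X}}$; $\bar q(t|\mathcal{X}_j):=\frac{\sum_{x\in\mathcal{X}_j}q(t|x)p(x)}{p(\mathcal{X}_j)}$. *)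

theory Defs
  imports "HOL-Analysis.Analysis"
begin

definition joint_dist :: "('x::finite \<Rightarrow> 'y::finite \<Rightarrow> real) \<Rightarrow> bool" where
  "joint_dist p \<longleftrightarrow> (\<forall>x y. 0 \<le> p x y) \<and> (\<Sum>x\<in>UNIV. \<Sum>y\<in>UNIV. p x y) = 1"

definition margX :: "('x::finite \<Rightarrow> 'y::finite \<Rightarrow> real) \<Rightarrow> 'x \<Rightarrow> real" where
  "margX p x = (\<Sum>y\<in>UNIV. p x y)"

definition margY :: "('x::finite \<Rightarrow> 'y::finite \<Rightarrow> real) \<Rightarrow> 'y \<Rightarrow> real" where
  "margY p y = (\<Sum>x\<in>UNIV. p x y)"

definition condY :: "('x::finite \<Rightarrow> 'y::finite \<Rightarrow> real) \<Rightarrow> 'x \<Rightarrow> 'y \<Rightarrow> real" where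
  "condY p x y = p x y / margX p x"

text \<open>Mutual information I(X;Y) (natural log; 0 log 0 = 0 since terms are multiplied by 0).\<close>
definition MI_XY :: "('x::finite \<Rightarrow> 'y::finite \<Rightarrow> real) \<Rightarrow> real" where
  "MI_XY p = (\<Sum>x\<in>UNIV. \<Sum>y\<in>UNIV. p x y * ln (p x y / (margX p x * margY p y)))"

text \<open>Channels C(X,T) with T = nat: q x t = q(t|x).\<close>
definition channel :: "('x \<Rightarrow> nat \<Rightarrow> real) \<Rightarrow> bool" where
  "channel q \<longleftrightarrow> (\<forall>x t. 0 \<le> q x t) \<and> (\<forall>x. (q x has_sum 1) UNIV)"

definition qT :: "('x::finite \<Rightarrow> 'y::finite \<Rightarrow> real) \<Rightarrow> ('x \<Rightarrow> nat \<Rightarrow> real) \<Rightarrow> nat \<Rightarrow> real" where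
  "qT p q t = (\<Sum>x\<in>UNIV. margX p x * q x t)"

definition qTY :: "('x::finite \<Rightarrow> 'y::finite \<Rightarrow> real) \<Rightarrow> ('x \<Rightarrow> nat \<Rightarrow> real) \<Rightarrow> nat \<Rightarrow> 'y \<Rightarrow> real" where
  "qTY p q t y = (\<Sum>x\<in>UNIV. p x y * q x t)"

text \<open>I_q(X;T), summed over t; each t-summand is nonnegative (a weighted KL divergence),
  and the series converges since I(X;T) \<le> H(X).\<close>
definition MI_XT :: "('x::finite \<Rightarrow> 'y::finite \<Rightarrow> real) \<Rightarrow> ('x \<Rightarrow> nat \<Rightarrow> real) \<Rightarrow> real" where
  "MI_XT p q = infsum (\<lambda>t. \<Sum>x\<in>UNIV. margX p x * q x t * ln ((margX p x * q x t) / (margX p x * qT p q t))) UNIV"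

definition MI_TY :: "('x::finite \<Rightarrow> 'y::finite \<Rightarrow> real) \<Rightarrow> ('x \<Rightarrow> nat \<Rightarrow> real) \<Rightarrow> real" where
  "MI_TY p q = infsum (\<lambda>t. \<Sum>y\<in>UNIV. qTY p q t y * ln (qTY p q t y / (qT p q t * margY p y))) UNIV"

definition IB :: "('x::finite \<Rightarrow> 'y::finite \<Rightarrow> real) \<Rightarrow> real \<Rightarrow> ('x \<Rightarrow> nat \<Rightarrow> real) set" where
  "IB p lam = {q. channel q \<and> lam \<le> MI_TY p q \<and>
     (\<forall>q'. channel q' \<and> lam \<le> MI_TY p q' \<longrightarrow> MI_XT p q \<le> MI_XT p q')}"

definition piX :: "('x::finite \<Rightarrow> 'y::finite \<Rightarrow> real) \<Rightarrow> 'x \<Rightarrow> 'x set" where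
  "piX p x = {x'. condY p x' = condY p x}"

definition qbar :: "('x::finite \<Rightarrow> 'y::finite \<Rightarrow> real) \<Rightarrow> ('x \<Rightarrow> nat \<Rightarrow> real) \<Rightarrow> 'x set \<Rightarrow> nat \<Rightarrow> real" where
  "qbar p q C t = (\<Sum>x\<in>C. q x t * margX p x) / (\<Sum>x\<in>C. margX p x)"

end

theory Submission
  imports Defs
begin

text \<open>Let q' = qbar \<circ> \<pi> be the p(x)-weighted average of q over the classes of \<sim>.
  Since p(y|x) is constant on classes, q' has the same q(t) and q(t,y) as q, hence the same
  I(T;Y). With \<phi>(u) = u ln u, the t-th summand of I(X;T) is \<Sum>x p(x) \<phi>(q(t|x)) - \<phi>(q(t)), and
  replacing q by q' lowers it by \<Sum>x p(x) B(q(t|x), q'(t|x)), where B is the Bregman divergence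
  of \<phi>; the linear part of B cancels because \<phi>'(q'(t|x)) is constant on classes. B is positive
  off the diagonal, so a minimiser of I(X;T) must equal q'. Only the full support of p(X) is
  used.\<close>

lemma has_sum_sum:
  fixes f :: "'a \<Rightarrow> 'b \<Rightarrow> real"
  assumes "finite S" and "\<And>x. x \<in> S \<Longrightarrow> (f x has_sum s x) A"
  shows "((\<lambda>t. \<Sum>x\<in>S. f x t) has_sum (\<Sum>x\<in>S. s x)) A"
  using assms by (induction S rule: finite_induct) (simp_all add: has_sum_add)

lemma summable_on_sum:
  fixes f :: "'a \<Rightarrow> 'b \<Rightarrow> real"
  assumes "finite S" and "\<And>x. x \<in> S \<Longrightarrow> f x summable_on A"
  shows "(\<lambda>t. \<Sum>x\<in>S. f x t) summable_on A"
  using has_sum_sum[where s="\<lambda>x. infsum (f x) A"] assms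
  by (metis has_sum_imp_summable summable_iff_has_sum_infsum)

lemma sum_weighted_class_average:
  fixes w f g :: "'a::finite \<Rightarrow> real" and C :: "'a \<Rightarrow> 'a set"
  assumes refl: "\<And>x. x \<in> C x" and class_eq: "\<And>x y. y \<in> C x \<Longrightarrow> C y = C x"
    and nz: "\<And>x. sum w (C x) \<noteq> 0" and g: "\<And>x y. y \<in> C x \<Longrightarrow> g y = g x"
  shows "(\<Sum>x\<in>UNIV. w x * g x * ((\<Sum>y\<in>C x. f y * w y) / sum w (C x)))
       = (\<Sum>x\<in>UNIV. w x * g x * f x)"
proof -
  let ?h = "\<lambda>y. g y * f y * w y / sum w (C y)"
  have sym: "{x. x \<in> UNIV \<and> y \<in> C x} = C y" for y
    using refl class_eq by blast
  have "(\<Sum>x\<in>UNIV. w x * g x * ((\<Sum>y\<in>C x. f y * w y) / sum w (C x)))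
      = (\<Sum>x\<in>UNIV. \<Sum>y\<in>{y. y \<in> UNIV \<and> y \<in> C x}. w x * ?h y)"
    by (intro sum.cong refl)
       (auto simp: sum_distrib_left sum_divide_distrib g class_eq mult_ac intro!: sum.cong)
  also have "\<dots> = (\<Sum>y\<in>UNIV. \<Sum>x\<in>{x. x \<in> UNIV \<and> y \<in> C x}. w x * ?h y)"
    by (rule sum.swap_restrict) simp_all
  also have "\<dots> = (\<Sum>y\<in>UNIV. sum w (C y) * ?h y)"
    by (simp only: sym sum_distrib_right)
  also have "\<dots> = (\<Sum>y\<in>UNIV. w y * g y * f y)"
    using nz by (simp add: mult_ac)
  finally show ?thesis .
qed

definition bregman_xlnx :: "real \<Rightarrow> real \<Rightarrow> real" where
  "bregman_xlnx u a = u * ln u - a * ln a - (ln a + 1) * (u - a)"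

lemma bregman_xlnx_pos:
  assumes "0 \<le> u" and "0 \<le> a" and "a = 0 \<Longrightarrow> u = 0" and "u \<noteq> a"
  shows "0 < bregman_xlnx u a"
proof -
  have a: "0 < a" using assms by force
  show ?thesis
  proof (cases "u = 0")
    case True
    then show ?thesis using a by (simp add: bregman_xlnx_def algebra_simps)
  next
    case False
    then have u: "0 < u" using assms(1) by simp
    have "ln a - ln u < (a - u) / u"
      using ln_diff_less[OF a u] assms(4) by simp
    then have "u * (ln a - ln u) < a - u"
      using u by (simp add: field_simps)
    then show ?thesis by (simp add: bregman_xlnx_def algebra_simps)
  qed
qed

lemma bregman_xlnx_nonneg:
  assumes "0 \<le> u" and "0 \<le> a" and "a = 0 \<Longrightarrow> u = 0"
  shows "0 \<le> bregman_xlnx u a"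
  using bregman_xlnx_pos[OF assms] by (cases "u = a") (auto simp: bregman_xlnx_def)

lemma abs_mult_ln_div_le:
  fixes m r Q :: real
  assumes m: "0 < m" and r: "0 \<le> r" and Q: "m * r \<le> Q"
  shows "\<bar>r * ln (r / Q)\<bar> \<le> Q + r * \<bar>ln m\<bar>"
proof (cases "r = 0")
  case True
  then show ?thesis using Q by simp
next
  case False
  then have r: "0 < r" using r by simp
  have "0 < m * r" using m r by simp
  then have Q: "0 < Q" "r / Q \<le> 1 / m"
    using m Q by (auto simp: field_simps)
  have "r * ln (r / Q) \<le> r * ln (1 / m)"
    using Q r m by (intro mult_left_mono) auto
  also have "\<dots> \<le> r * \<bar>ln m\<bar>"
    using r m mult_left_mono[OF abs_ge_minus_self[of "ln m"], of r] by (simp add: ln_div)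
  finally have upper: "r * ln (r / Q) \<le> r * \<bar>ln m\<bar>" .
  have "r * (1 - Q / r) \<le> r * ln (r / Q)"
    using ln_le_minus_one[of "Q / r"] Q r by (intro mult_left_mono) (auto simp: ln_div)
  moreover have "r * (1 - Q / r) = r - Q"
    using r by (simp add: field_simps)
  ultimately have lower: "r - Q \<le> r * ln (r / Q)"
    by simp
  have "0 \<le> r * \<bar>ln m\<bar>"
    using r by simp
  then show ?thesis
    unfolding abs_le_iff using upper lower Q(1) r by (intro conjI; linarith)
qed

lemma piX_refl: "x \<in> piX p x"
  by (simp add: piX_def)

lemma piX_eq: "y \<in> piX p x \<Longrightarrow> piX p y = piX p x"
  by (simp add: piX_def)

lemma sum_margX_piX_pos:
  assumes "\<forall>x. 0 < margX p x"
  shows "0 < sum (margX p) (piX p x)"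
  using assms piX_refl by (intro sum_pos2) (auto intro: less_imp_le)

definition averaged_channel ::
    "('x::finite \<Rightarrow> 'y::finite \<Rightarrow> real) \<Rightarrow> ('x \<Rightarrow> nat \<Rightarrow> real) \<Rightarrow> 'x \<Rightarrow> nat \<Rightarrow> real" where
  "averaged_channel p q x t = qbar p q (piX p x) t"

lemma averaged_channel_piX_eq:
  "y \<in> piX p x \<Longrightarrow> averaged_channel p q y t = averaged_channel p q x t"
  by (simp add: averaged_channel_def piX_eq)

lemma sum_margX_averaged_channel:
  fixes p :: "'x::finite \<Rightarrow> 'y::finite \<Rightarrow> real"
  assumes pos: "\<forall>x. 0 < margX p x" and g: "\<And>x y. y \<in> piX p x \<Longrightarrow> g y = g x"
  shows "(\<Sum>x\<in>UNIV. margX p x * g x * averaged_channel p q x t)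
       = (\<Sum>x\<in>UNIV. margX p x * g x * q x t)"
  unfolding averaged_channel_def qbar_def
  using sum_weighted_class_average[of "piX p" "margX p" g "\<lambda>x. q x t"]
    piX_refl piX_eq sum_margX_piX_pos[OF pos] g
  by (metis less_irrefl)

lemma averaged_channel_nonneg:
  assumes "\<forall>x. 0 < margX p x" and "channel q"
  shows "0 \<le> averaged_channel p q x t"
  using assms unfolding averaged_channel_def qbar_def channel_def
  by (intro divide_nonneg_nonneg sum_nonneg) (simp_all add: less_imp_le)

lemma averaged_channel_eq_0_imp:
  assumes pos: "\<forall>x. 0 < margX p x" and "channel q" and "averaged_channel p q x t = 0"
  shows "q x t = 0"
proof -
  have nonneg: "\<forall>y\<in>piX p x. 0 \<le> q y t * margX p y"
    using assms(2) pos by (simp add: channel_def less_imp_le)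
  have "(\<Sum>y\<in>piX p x. q y t * margX p y) = 0"
    using assms(3) sum_margX_piX_pos[OF pos, of x] by (simp add: averaged_channel_def qbar_def)
  then have "q x t * margX p x = 0"
    using nonneg piX_refl[of x p] by (simp add: sum_nonneg_eq_0_iff)
  then show ?thesis
    using pos[rule_format, of x] by simp
qed

lemma channel_averaged_channel:
  fixes p :: "'x::finite \<Rightarrow> 'y::finite \<Rightarrow> real"
  assumes pos: "\<forall>x. 0 < margX p x" and ch: "channel q"
  shows "channel (averaged_channel p q)"
  unfolding channel_def
proof (intro conjI allI)
  fix x t
  show "0 \<le> averaged_channel p q x t"
    using averaged_channel_nonneg[OF pos ch] .
next
  fix x
  let ?M = "sum (margX p) (piX p x)"
  have "((\<lambda>t. \<Sum>y\<in>piX p x. q y t * margX p y) has_sum (\<Sum>y\<in>piX p x. 1 * margX p y)) UNIV"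
    using ch by (intro has_sum_sum has_sum_cmult_left) (auto simp: channel_def)
  then have "((\<lambda>t. (\<Sum>y\<in>piX p x. q y t * margX p y) / ?M) has_sum ?M / ?M) UNIV"
    by (intro has_sum_divide_const) simp
  then show "(averaged_channel p q x has_sum 1) UNIV"
    using sum_margX_piX_pos[OF pos, of x] by (simp add: averaged_channel_def[abs_def] qbar_def)
qed

lemma qT_averaged_channel:
  assumes "\<forall>x. 0 < margX p x"
  shows "qT p (averaged_channel p q) = qT p q"
  using sum_margX_averaged_channel[OF assms, of "\<lambda>_. 1"] by (simp add: qT_def fun_eq_iff)

lemma qTY_averaged_channel:
  fixes p :: "'x::finite \<Rightarrow> 'y::finite \<Rightarrow> real"
  assumes pos: "\<forall>x. 0 < margX p x"
  shows "qTY p (averaged_channel p q) = qTY p q"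
proof (intro ext)
  fix t y
  have p_eq: "p x y = margX p x * condY p x y" for x
    using pos by (simp add: condY_def less_imp_neq[symmetric])
  have "\<And>x x'. x' \<in> piX p x \<Longrightarrow> condY p x' y = condY p x y"
    by (simp add: piX_def)
  then show "qTY p (averaged_channel p q) t y = qTY p q t y"
    using sum_margX_averaged_channel[OF pos] by (simp add: qTY_def p_eq)
qed

lemma MI_TY_averaged_channel:
  assumes "\<forall>x. 0 < margX p x"
  shows "MI_TY p (averaged_channel p q) = MI_TY p q"
  unfolding MI_TY_def qTY_averaged_channel[OF assms] qT_averaged_channel[OF assms] ..

definition MI_XT_term :: "('x::finite \<Rightarrow> 'y::finite \<Rightarrow> real) \<Rightarrow> ('x \<Rightarrow> nat \<Rightarrow> real) \<Rightarrow> nat \<Rightarrow> real" where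
  "MI_XT_term p r t =
     (\<Sum>x\<in>UNIV. margX p x * r x t * ln ((margX p x * r x t) / (margX p x * qT p r t)))"

lemma margX_mult_le_qT:
  assumes "\<forall>x. 0 < margX p x" and "\<And>x. 0 \<le> r x t"
  shows "margX p x * r x t \<le> qT p r t"
  unfolding qT_def using assms
  by (intro member_le_sum[where f = "\<lambda>x. margX p x * r x t"]) (simp_all add: less_imp_le)

lemma has_sum_qT:
  assumes "channel r"
  shows "(qT p r has_sum sum (margX p) UNIV) UNIV"
proof -
  have "((\<lambda>t. \<Sum>x\<in>UNIV. margX p x * r x t) has_sum (\<Sum>x\<in>UNIV. margX p x * 1)) UNIV"
    using assms by (intro has_sum_sum has_sum_cmult_right) (auto simp: channel_def)
  then show ?thesis
    by (simp add: qT_def[abs_def])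
qed

lemma summable_MI_XT_term:
  fixes p :: "'x::finite \<Rightarrow> 'y::finite \<Rightarrow> real"
  assumes pos: "\<forall>x. 0 < margX p x" and ch: "channel r"
  shows "MI_XT_term p r summable_on UNIV"
  unfolding MI_XT_term_def
proof (intro summable_on_sum)
  fix x
  let ?m = "margX p x"
  have m: "0 < ?m" and r: "\<And>t. 0 \<le> r x t"
    using pos ch by (auto simp: channel_def)
  have majorant: "((\<lambda>t. ?m * qT p r t + ?m * \<bar>ln ?m\<bar> * r x t) has_sum
          ?m * sum (margX p) UNIV + ?m * \<bar>ln ?m\<bar> * 1) UNIV"
    using ch has_sum_qT by (intro has_sum_add has_sum_cmult_right) (auto simp: channel_def)
  have bound: "norm (?m * r x t * ln ((?m * r x t) / (?m * qT p r t)))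
               \<le> ?m * qT p r t + ?m * \<bar>ln ?m\<bar> * r x t" for t
  proof -
    have "\<bar>r x t * ln (r x t / qT p r t)\<bar> \<le> qT p r t + r x t * \<bar>ln ?m\<bar>"
      using abs_mult_ln_div_le[OF m r] margX_mult_le_qT[OF pos, of r] ch
      by (simp add: channel_def)
    then have "?m * \<bar>r x t * ln (r x t / qT p r t)\<bar> \<le> ?m * (qT p r t + r x t * \<bar>ln ?m\<bar>)"
      using m by simp
    then show ?thesis
      using m by (simp add: abs_mult algebra_simps)
  qed
  have "(\<lambda>t. norm (?m * r x t * ln ((?m * r x t) / (?m * qT p r t)))) summable_on UNIV"
    by (rule Infinite_Sum.abs_summable_on_comparison_test'[OF has_sum_imp_summable[OF majorant]])
       (rule bound)
  then show "(\<lambda>t. ?m * r x t * ln ((?m * r x t) / (?m * qT p r t))) summable_on UNIV"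
    by (rule Infinite_Sum.abs_summable_summable)
qed simp

text \<open>\<open>MI_XT\<close> is an \<open>infsum\<close>, which is 0 on non-summable families, so the termwise
  comparison of \<open>I(X;T)\<close> below rests on this summability.\<close>

lemma has_sum_MI_XT_term:
  assumes "\<forall>x. 0 < margX p x" and "channel r"
  shows "(MI_XT_term p r has_sum MI_XT p r) UNIV"
  using summable_MI_XT_term[OF assms]
  by (simp add: summable_iff_has_sum_infsum MI_XT_def MI_XT_term_def[abs_def])

lemma MI_XT_term_eq:
  fixes p :: "'x::finite \<Rightarrow> 'y::finite \<Rightarrow> real"
  assumes pos: "\<forall>x. 0 < margX p x" and r: "\<And>x. 0 \<le> r x t"
  shows "MI_XT_term p r t = (\<Sum>x\<in>UNIV. margX p x * (r x t * ln (r x t))) - qT p r t * ln (qT p r t)"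
proof -
  have "margX p x * r x t * ln ((margX p x * r x t) / (margX p x * qT p r t))
      = margX p x * (r x t * ln (r x t)) - margX p x * r x t * ln (qT p r t)" for x
  proof (cases "r x t = 0")
    case False
    then have "0 < r x t" "0 < margX p x"
      using r[of x] pos by auto
    moreover from this have "0 < qT p r t"
      using margX_mult_le_qT[where r = r and t = t and x = x, OF pos r] by (smt (verit) mult_pos_pos)
    ultimately show ?thesis
      by (simp add: ln_div algebra_simps)
  qed simp
  then show ?thesis
    by (simp add: MI_XT_term_def qT_def sum_subtractf sum_distrib_right)
qed

lemma MI_XT_term_minus_averaged_channel:
  fixes p :: "'x::finite \<Rightarrow> 'y::finite \<Rightarrow> real"
  assumes pos: "\<forall>x. 0 < margX p x" and ch: "channel q"
  shows "MI_XT_term p q t - MI_XT_term p (averaged_channel p q) t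
       = (\<Sum>x\<in>UNIV. margX p x * bregman_xlnx (q x t) (averaged_channel p q x t))"
proof -
  let ?a = "\<lambda>x. averaged_channel p q x t"
  \<comment> \<open>the linear part of the Bregman divergence cancels, as \<open>ln a + 1\<close> is constant on classes\<close>
  have "(\<Sum>x\<in>UNIV. margX p x * (ln (?a x) + 1) * ?a x) = (\<Sum>x\<in>UNIV. margX p x * (ln (?a x) + 1) * q x t)"
    by (intro sum_margX_averaged_channel[OF pos]) (metis averaged_channel_piX_eq)
  moreover have "MI_XT_term p q t - MI_XT_term p (averaged_channel p q) t
      = (\<Sum>x\<in>UNIV. margX p x * (q x t * ln (q x t))) - (\<Sum>x\<in>UNIV. margX p x * (?a x * ln (?a x)))"
    using ch averaged_channel_nonneg[OF pos ch]
    by (simp add: MI_XT_term_eq[OF pos] qT_averaged_channel[OF pos] channel_def)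
  ultimately show ?thesis
    by (simp add: bregman_xlnx_def sum_subtractf sum.distrib algebra_simps)
qed

lemma MI_XT_averaged_channel_less:
  fixes p :: "'x::finite \<Rightarrow> 'y::finite \<Rightarrow> real"
  assumes pos: "\<forall>x. 0 < margX p x" and ch: "channel q"
    and ne: "q x0 t0 \<noteq> averaged_channel p q x0 t0"
  shows "MI_XT p (averaged_channel p q) < MI_XT p q"
proof -
  let ?D = "\<lambda>x t. margX p x * bregman_xlnx (q x t) (averaged_channel p q x t)"
  have q: "0 \<le> q x t" for x t
    using ch by (simp add: channel_def)
  have D_nonneg: "0 \<le> ?D x t" for x t
    using pos q averaged_channel_nonneg[OF pos ch] averaged_channel_eq_0_imp[OF pos ch]
    by (simp add: bregman_xlnx_nonneg less_imp_le)
  have "0 < ?D x0 t0"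
    using pos q averaged_channel_nonneg[OF pos ch] averaged_channel_eq_0_imp[OF pos ch] ne
    by (simp add: bregman_xlnx_pos)
  then have "0 < (\<Sum>x\<in>UNIV. ?D x t0)"
    using D_nonneg by (intro sum_pos2[of UNIV x0]) auto
  moreover have "0 \<le> (\<Sum>x\<in>UNIV. ?D x t)" for t
    using D_nonneg by (simp add: sum_nonneg)
  ultimately show ?thesis
    using MI_XT_term_minus_averaged_channel[OF pos ch]
    by (intro has_sum_strict_mono[OF has_sum_MI_XT_term has_sum_MI_XT_term, where x = t0])
       (auto simp: pos ch channel_averaged_channel[OF pos ch] field_simps)
qed

theorem proposition1:
  fixes p :: "'x::finite \<Rightarrow> 'y::finite \<Rightarrow> real"
    and q :: "'x \<Rightarrow> nat \<Rightarrow> real"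
    and lam :: real
  assumes "joint_dist p"
    and "\<forall>x. 0 < margX p x"
    and "0 \<le> lam" and "lam \<le> MI_XY p"
    and "q \<in> IB p lam"
  shows "\<forall>x t. q x t = qbar p q (piX p x) t"
proof (intro allI, rule ccontr)
  fix x t
  assume "q x t \<noteq> qbar p q (piX p x) t"
  then have ne: "q x t \<noteq> averaged_channel p q x t"
    by (simp add: averaged_channel_def)
  have pos: "\<forall>x. 0 < margX p x" by fact
  have ch: "channel q" and feasible: "lam \<le> MI_TY p q"
    and minimal: "\<And>q'. channel q' \<Longrightarrow> lam \<le> MI_TY p q' \<Longrightarrow> MI_XT p q \<le> MI_XT p q'"
    using \<open>q \<in> IB p lam\<close> by (auto simp: IB_def)
  have "MI_XT p q \<le> MI_XT p (averaged_channel p q)"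
    using minimal channel_averaged_channel[OF pos ch] feasible MI_TY_averaged_channel[OF pos]
    by simp
  moreover have "MI_XT p (averaged_channel p q) < MI_XT p q"
    using MI_XT_averaged_channel_less[OF pos ch ne] .
  ultimately show False
    by simp
qed

end
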